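(* Suppose $f$ satisfies Assumption 1, $u_c$ satisfies Assumption 2, and $U:\mathbb{R}^n\times[0,\infty)\to\mathbb{R}^m$ is StL. Then $\bar F^E_U$ is EPC with $\bar F^e_U$, where $\bar F^E_U(x,T):=x+Tf(x,U(x,T))$ and $\bar F^e_U(x,T):=F^e(x,U(x,T),T)$.
   Context: Assumption 1: $f(0,0)=0$ and for every $M,M_u\ge0$ there is $L>0$ with $|f(x,u)-f(y,v)|\le L(|x-y|+|u-v|)$ for $|x|,|y|\le M$, $|u|,|v|\le M_u$. Assumption 2: $u_c(0)=0$ and for every $M\ge0$ there is $L>0$ with $|u_c(x)-u_c(y)|\le L|x-y|$ for $|x|,|y|\le M$. $F^e(x,u,T)$: time-$T$ value of the solution of $\dot z=f(z,u)$ with constant $u$ and $z(0)=x$. StL: for each $M\ge0$ there exist $K(M)>0$, $T^*(M)>0$ ($T^*$ nonincreasing) with $U(0,T)=0$ and $|U(x,T)-U(y,T)|\le K|x-y|$ for $|x|,|y|\le M$, $T\in[0,T^* )$. EPC: $\bar F^a$ is EPC with $\bar F^b$ if for each $M\ge0$ there exist $K(M)>0$, $T^*(M)>0$, $\rho\in\mathcal{K}_\infty$ with $|\bar F^a(x,T)-\bar F^b(y,T)|\le(1+KT)|x-y|+T\rho(T)\max\{|x|,|y|\}$ for all $|x|,|y|\le M$, $T\in(0,T^* )$. *)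

theory Defs
  imports "HOL-Analysis.Analysis"
begin

definition assumption1 :: "(real^'n \<Rightarrow> real^'m \<Rightarrow> real^'n) \<Rightarrow> bool" where
  "assumption1 f \<longleftrightarrow> f 0 0 = 0 \<and>
     (\<forall>M Mu. M \<ge> 0 \<and> Mu \<ge> 0 \<longrightarrow> (\<exists>L>0. \<forall>x y u v.
        norm x \<le> M \<and> norm y \<le> M \<and> norm u \<le> Mu \<and> norm v \<le> Mu \<longrightarrow>
        norm (f x u - f y v) \<le> L * (norm (x - y) + norm (u - v))))"

definition assumption2 :: "(real^'n \<Rightarrow> real^'m) \<Rightarrow> bool" where
  "assumption2 uc \<longleftrightarrow> uc 0 = 0 \<and>
     (\<forall>M\<ge>0. \<exists>L>0. \<forall>x y. norm x \<le> M \<and> norm y \<le> M \<longrightarrow>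
        norm (uc x - uc y) \<le> L * norm (x - y))"

definition Fe :: "(real^'n \<Rightarrow> real^'m \<Rightarrow> real^'n) \<Rightarrow> real^'n \<Rightarrow> real^'m \<Rightarrow> real \<Rightarrow> real^'n" where
  "Fe f x u T = (THE w. \<exists>z. z 0 = x \<and>
      (\<forall>t\<in>{0..T}. (z has_vector_derivative f (z t) u) (at t within {0..T})) \<and> z T = w)"

definition StL :: "(real^'n \<Rightarrow> real \<Rightarrow> real^'m) \<Rightarrow> bool" where
  "StL U \<longleftrightarrow> (\<exists>K Ts :: real \<Rightarrow> real.
     (\<forall>M\<ge>0. K M > 0 \<and> Ts M > 0) \<and> antimono_on {0..} Ts \<and>
     (\<forall>M\<ge>0. \<forall>T. 0 \<le> T \<and> T < Ts M \<longrightarrow> U 0 T = 0 \<and>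
        (\<forall>x y. norm x \<le> M \<and> norm y \<le> M \<longrightarrow> norm (U x T - U y T) \<le> K M * norm (x - y))))"

definition class_Kinf :: "(real \<Rightarrow> real) \<Rightarrow> bool" where
  "class_Kinf \<rho> \<longleftrightarrow> continuous_on {0..} \<rho> \<and> strict_mono_on {0..} \<rho> \<and> \<rho> 0 = 0 \<and>
     filterlim \<rho> at_top at_top"

definition EPC :: "(real^'n \<Rightarrow> real \<Rightarrow> real^'n) \<Rightarrow> (real^'n \<Rightarrow> real \<Rightarrow> real^'n) \<Rightarrow> bool" where
  "EPC Fa Fb \<longleftrightarrow> (\<forall>M\<ge>0. \<exists>K>0. \<exists>Ts>0. \<exists>\<rho>. class_Kinf \<rho> \<and>
     (\<forall>x y T. norm x \<le> M \<and> norm y \<le> M \<and> 0 < T \<and> T < Ts \<longrightarrow>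
        norm (Fa x T - Fb y T) \<le> (1 + K * T) * norm (x - y) + T * \<rho> T * max (norm x) (norm y)))"

end

theory Submission
  imports Defs
begin

text \<open>Both steps are compared with the Euler step from \<open>y\<close>. With \<open>L\<close> a Lipschitz constant of \<open>f\<close>
on the relevant bounded set and \<open>K\<close> one of \<open>U(\<cdot>, T)\<close>, the Euler steps from \<open>x\<close> and \<open>y\<close> differ
by at most \<open>(1 + L(1 + K)T)|x - y|\<close>. The exact solution from \<open>y\<close> under the frozen control
\<open>U(y, T)\<close> is obtained by Picard iteration and stays in a ball around \<open>y\<close> of radius
\<open>r = 2TL(1 + K)|y|\<close>, so it deviates from its Euler step by at most \<open>LrT\<close>; this is the
\<open>T \<rho>(T) |y|\<close> term with \<open>\<rho>\<close> linear. Local Lipschitz continuity of \<open>f\<close> makes the solution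
unique, hence it is the one selected by \<open>Fe\<close>.\<close>

lemma lipschitz_extension_from_cball:
  fixes h :: "'a::euclidean_space \<Rightarrow> 'b::metric_space"
  assumes h: "L-lipschitz_on (cball y r) h" and r: "0 \<le> r"
  obtains g where "L-lipschitz_on UNIV g" "\<And>a. g a \<in> h ` cball y r" "\<And>a. a \<in> cball y r \<Longrightarrow> g a = h a"
proof
  let ?p = "closest_point (cball y r)"
  have ne: "cball y r \<noteq> {}" using r by simp
  have "1-lipschitz_on UNIV ?p"
    by (intro lipschitz_onI) (simp_all add: closest_point_lipschitz[OF convex_cball closed_cball ne])
  moreover have "L-lipschitz_on (?p ` UNIV) h"
    using h by (rule lipschitz_on_subset) (auto intro: closest_point_in_set[OF closed_cball ne])
  ultimately show "L-lipschitz_on UNIV (\<lambda>a. h (?p a))"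
    using lipschitz_on_compose2 by fastforce
  show "h (?p a) \<in> h ` cball y r" for a
    using closest_point_in_set[OF closed_cball ne] by blast
  show "h (?p a) = h a" if "a \<in> cball y r" for a
    using that by (simp add: closest_point_self)
qed

text \<open>The integration interval is clamped to \<open>[0, T]\<close> so that the Picard map sends continuous
  functions on the whole line to bounded ones, i.e.\ acts on \<open>real \<Rightarrow>\<^sub>C 'a\<close>.\<close>

definition picard :: "real \<Rightarrow> 'a \<Rightarrow> ('a \<Rightarrow> 'a) \<Rightarrow> (real \<Rightarrow> 'a) \<Rightarrow> real \<Rightarrow> 'a::euclidean_space"
  where "picard T y g z t = y + integral {0..max 0 (min T t)} (\<lambda>s. g (z s))"

lemma picard_in_bcontfun:
  fixes g :: "'a::euclidean_space \<Rightarrow> 'a"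
  assumes g: "continuous_on UNIV g" and gB: "\<And>a. norm (g a) \<le> B"
    and z: "continuous_on UNIV z" and T: "0 \<le> T"
  shows "picard T y g z \<in> bcontfun"
proof (rule bcontfun_normI)
  have gz: "continuous_on {0..T} (\<lambda>s. g (z s))"
    by (rule continuous_on_compose2[OF g continuous_on_subset[OF z]]) auto
  have "continuous_on {0..T} (\<lambda>c. integral {0..c} (\<lambda>s. g (z s)))"
    unfolding continuous_on_eq_continuous_within
    using integral_has_vector_derivative[OF gz] has_vector_derivative_continuous by blast
  then have "continuous_on UNIV (\<lambda>t. integral {0..max 0 (min T t)} (\<lambda>s. g (z s)))"
    by (rule continuous_on_compose2) (use T in \<open>auto intro!: continuous_intros\<close>)
  then show "continuous_on UNIV (picard T y g z)"
    unfolding picard_def by (intro continuous_intros)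
  show "norm (picard T y g z t) \<le> norm y + B * T" for t
  proof -
    let ?c = "max 0 (min T t)"
    have "norm (integral {0..?c} (\<lambda>s. g (z s))) \<le> B * (?c - 0)"
      by (intro integral_bound continuous_on_subset[OF gz] gB) (use T in auto)
    also have "\<dots> \<le> B * T"
      using gB[of y] T by (intro mult_left_mono) (auto intro: order_trans[OF norm_ge_zero])
    finally show ?thesis
      unfolding picard_def by (metis add_left_mono norm_triangle_ineq order_trans)
  qed
qed

lemma picard_contraction:
  fixes g :: "'a::euclidean_space \<Rightarrow> 'a" and z w :: "real \<Rightarrow>\<^sub>C 'a"
  assumes g: "L-lipschitz_on UNIV g" and T: "0 \<le> T"
  shows "norm (picard T y g z t - picard T y g w t) \<le> L * T * dist z w"
proof -
  let ?c = "max 0 (min T t)"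
  have gc: "continuous_on UNIV g" using g by (rule lipschitz_on_continuous_on)
  have gz: "continuous_on {0..?c} (\<lambda>s. g (z s))" and gw: "continuous_on {0..?c} (\<lambda>s. g (w s))"
    by (auto intro!: continuous_on_compose2[OF gc])
  have "picard T y g z t - picard T y g w t = integral {0..?c} (\<lambda>s. g (z s) - g (w s))"
    unfolding picard_def
    using integral_diff[OF integrable_continuous_real[OF gz] integrable_continuous_real[OF gw]] by simp
  also have "norm \<dots> \<le> (L * dist z w) * (?c - 0)"
  proof (rule integral_bound)
    show "continuous_on {0..?c} (\<lambda>s. g (z s) - g (w s))" using gz gw by (intro continuous_intros)
    show "norm (g (z s) - g (w s)) \<le> L * dist z w" for s
      using lipschitz_on_normD[OF g] dist_bounded[of z s w] lipschitz_on_nonneg[OF g]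
      by (metis UNIV_I dist_norm mult_left_mono order_trans)
  qed simp
  also have "\<dots> \<le> L * T * dist z w"
  proof -
    have "dist z w * ?c \<le> dist z w * T" using T by (intro mult_left_mono) auto
    from mult_left_mono[OF this lipschitz_on_nonneg[OF g]] show ?thesis
      by (simp add: ac_simps)
  qed
  finally show ?thesis .
qed

lemma picard_fixpoint_solves:
  fixes g :: "'a::euclidean_space \<Rightarrow> 'a"
  assumes g: "L-lipschitz_on UNIV g" and gB: "\<And>a. norm (g a) \<le> B" and LT: "L * T < 1" and T: "0 < T"
  obtains z where "z 0 = y"
    "\<And>t. t \<in> {0..T} \<Longrightarrow> (z has_vector_derivative g (z t)) (at t within {0..T})"
    "\<And>t. t \<in> {0..T} \<Longrightarrow> norm (z t - y) \<le> B * t"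
proof -
  have gc: "continuous_on UNIV g" using g by (rule lipschitz_on_continuous_on)
  define P where "P z = Bcontfun (picard T y g (apply_bcontfun z))" for z :: "real \<Rightarrow>\<^sub>C 'a"
  have P_apply: "apply_bcontfun (P z) = picard T y g z" for z
    unfolding P_def by (rule Bcontfun_inverse[OF picard_in_bcontfun[OF gc gB]]) (use T in auto)
  have "dist (P z) (P w) \<le> L * T * dist z w" for z w
    using picard_contraction[OF g less_imp_le[OF T]] by (intro dist_bound) (simp add: P_apply dist_norm)
  then obtain z where "P z = z"
    using banach_fix_type[of "L * T" P] LT lipschitz_on_nonneg[OF g] T by auto
  then have z: "z t = y + integral {0..t} (\<lambda>s. g (z s))" if "t \<in> {0..T}" for t
    using P_apply[of z] that by (metis atLeastAtMost_iff max.absorb2 min.absorb2 picard_def)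
  have gz: "continuous_on {0..T} (\<lambda>s. g (z s))"
    by (rule continuous_on_compose2[OF gc]) auto
  show ?thesis
  proof
    show "z 0 = y" using z[of 0] T by simp
    fix t assume t: "t \<in> {0..T}"
    have "((\<lambda>u. y + integral {0..u} (\<lambda>s. g (z s))) has_vector_derivative g (z t)) (at t within {0..T})"
      using integral_has_vector_derivative[OF gz t] by (intro derivative_eq_intros) auto
    then show "(z has_vector_derivative g (z t)) (at t within {0..T})"
      by (rule has_vector_derivative_transform[OF t, rotated]) (simp add: z)
    have "norm (integral {0..t} (\<lambda>s. g (z s))) \<le> B * (t - 0)"
      using t by (intro integral_bound continuous_on_subset[OF gz] gB) auto
    then show "norm (z t - y) \<le> B * t" using z[OF t] by simp
  qed
qed

lemma ode_exists_in_cball: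
  fixes h :: "'a::euclidean_space \<Rightarrow> 'a"
  assumes h: "L-lipschitz_on (cball y r) h" and hB: "\<And>a. a \<in> cball y r \<Longrightarrow> norm (h a) \<le> B"
    and BT: "B * T \<le> r" and LT: "L * T < 1" and T: "0 < T" and r: "0 \<le> r"
  obtains z where "z 0 = y"
    "\<And>t. t \<in> {0..T} \<Longrightarrow> (z has_vector_derivative h (z t)) (at t within {0..T})"
    "\<And>t. t \<in> {0..T} \<Longrightarrow> z t \<in> cball y r"
proof -
  obtain g where g: "L-lipschitz_on UNIV g" and g_range: "\<And>a. g a \<in> h ` cball y r"
    and g_eq: "\<And>a. a \<in> cball y r \<Longrightarrow> g a = h a"
    using lipschitz_extension_from_cball[OF h r] by blast
  have gB: "norm (g a) \<le> B" for a using g_range[of a] hB by auto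
  obtain z where z0: "z 0 = y"
    and z': "\<And>t. t \<in> {0..T} \<Longrightarrow> (z has_vector_derivative g (z t)) (at t within {0..T})"
    and z_near: "\<And>t. t \<in> {0..T} \<Longrightarrow> norm (z t - y) \<le> B * t"
    using picard_fixpoint_solves[OF g gB LT T] by blast
  have z_in: "z t \<in> cball y r" if t: "t \<in> {0..T}" for t
  proof -
    have "B * t \<le> B * T" using t gB[of y] by (intro mult_left_mono) (auto intro: order_trans[OF norm_ge_zero])
    then show ?thesis using z_near[OF t] BT by (simp add: dist_norm norm_minus_commute)
  qed
  show ?thesis
  proof (rule that)
    show "z 0 = y" by (fact z0)
    show "z t \<in> cball y r" if "t \<in> {0..T}" for t using that by (rule z_in)
    show "(z has_vector_derivative h (z t)) (at t within {0..T})" if "t \<in> {0..T}" for t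
      using z'[OF that] g_eq[OF z_in[OF that]] by simp
  qed
qed

lemma solution_minus_euler_step:
  fixes h :: "'a::real_normed_vector \<Rightarrow> 'a"
  assumes z: "\<And>t. t \<in> {0..T} \<Longrightarrow> (z has_vector_derivative h (z t)) (at t within {0..T})"
    and z_in: "\<And>t. t \<in> {0..T} \<Longrightarrow> z t \<in> cball (z 0) r"
    and h: "L-lipschitz_on (cball (z 0) r) h" and T: "0 \<le> T"
  shows "norm (z T - z 0 - T *\<^sub>R h (z 0)) \<le> T * (L * r)"
proof -
  have z0_in: "z 0 \<in> cball (z 0) r" using z_in[of 0] T by simp
  have "norm (h (z t) - h (z 0)) \<le> L * r" if t: "t \<in> {0..T}" for t
  proof -
    have "norm (h (z t) - h (z 0)) \<le> L * norm (z t - z 0)"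
      by (rule lipschitz_on_normD[OF h z_in[OF t] z0_in])
    also have "\<dots> \<le> L * r"
      using z_in[OF t] lipschitz_on_nonneg[OF h]
      by (intro mult_left_mono) (auto simp: dist_norm norm_minus_commute)
    finally show ?thesis .
  qed
  then show ?thesis
    using vector_differentiable_bound_linearization[of "{0..T}" z "\<lambda>t. h (z t)" 0 T 0 "L * r"] z T
    by (simp add: closed_segment_eq_real_ivl)
qed

lemma has_vector_derivative_imp_continuous_on:
  "(\<And>t. t \<in> S \<Longrightarrow> (z has_vector_derivative z' t) (at t within S)) \<Longrightarrow> continuous_on S z"
  unfolding continuous_on_eq_continuous_within using has_vector_derivative_continuous by blast

lemma ode_solutions_agree:
  fixes h :: "'a::real_inner \<Rightarrow> 'a"
  assumes z: "\<And>t. t \<in> {0..T} \<Longrightarrow> (z has_vector_derivative h (z t)) (at t within {0..T})"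
    and w: "\<And>t. t \<in> {0..T} \<Longrightarrow> (w has_vector_derivative h (w t)) (at t within {0..T})"
    and lip: "\<And>t. t \<in> {0..T} \<Longrightarrow> norm (h (z t) - h (w t)) \<le> L * norm (z t - w t)"
    and zw0: "z 0 = w 0" and T: "0 \<le> T"
  shows "z T = w T"
proof -
  define D where "D t = z t - w t" for t
  define \<phi> where "\<phi> t = exp (- (2 * L) * t) * (D t \<bullet> D t)" for t
  \<comment> \<open>\<open>\<phi>\<close> is nonincreasing because \<open>(z - w) \<bullet> (h z - h w) \<le> L |z - w|\<^sup>2\<close>.\<close>
  have "\<phi> T \<le> \<phi> 0"
  proof (rule DERIV_nonpos_imp_decreasing_open[OF T])
    have "continuous_on {0..T} z" by (rule has_vector_derivative_imp_continuous_on[OF z])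
    moreover have "continuous_on {0..T} w" by (rule has_vector_derivative_imp_continuous_on[OF w])
    ultimately show "continuous_on {0..T} \<phi>"
      unfolding \<phi>_def D_def by (intro continuous_intros)
    fix t assume t: "0 < t" "t < T"
    then have tT: "t \<in> {0..T}" and at_t: "at t within {0..T} = at t" by (auto intro: at_within_Icc_at)
    have dz: "(z has_derivative (\<lambda>x. x *\<^sub>R h (z t))) (at t)"
      using z[OF tT] unfolding at_t has_vector_derivative_def .
    have dw: "(w has_derivative (\<lambda>x. x *\<^sub>R h (w t))) (at t)"
      using w[OF tT] unfolding at_t has_vector_derivative_def .
    let ?d = "exp (- (2 * L) * t) * (- (2 * L) * (D t \<bullet> D t) + 2 * (D t \<bullet> (h (z t) - h (w t))))"
    have "(\<phi> has_real_derivative ?d) (at t)"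
      unfolding \<phi>_def D_def has_field_derivative_def
      by (rule derivative_eq_intros dz dw refl | simp)+
        (rule ext, simp add: algebra_simps inner_diff_left inner_diff_right inner_commute)
    moreover have "D t \<bullet> (h (z t) - h (w t)) \<le> L * (D t \<bullet> D t)"
    proof -
      have "D t \<bullet> (h (z t) - h (w t)) \<le> norm (D t) * norm (h (z t) - h (w t))"
        by (rule Cauchy_Schwarz_ineq2[THEN order_trans[OF abs_ge_self]])
      also have "\<dots> \<le> norm (D t) * (L * norm (D t))"
        using lip[OF tT] unfolding D_def by (intro mult_left_mono) auto
      also have "\<dots> = L * (D t \<bullet> D t)"
        by (simp add: power2_norm_eq_inner[symmetric] power2_eq_square)
      finally show ?thesis .
    qed
    then have "?d \<le> 0" by (simp add: mult_nonneg_nonpos)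
    ultimately show "\<exists>d. (\<phi> has_real_derivative d) (at t) \<and> d \<le> 0" by blast
  qed
  then have "D T \<bullet> D T \<le> 0" using zw0 by (simp add: \<phi>_def D_def mult_le_0_iff)
  then show ?thesis
    unfolding D_def by (metis eq_iff_diff_eq_0 inner_eq_zero_iff inner_ge_zero order_antisym)
qed

definition joint_lipschitz ::
    "real \<Rightarrow> real \<Rightarrow> real \<Rightarrow> ('a::real_normed_vector \<Rightarrow> 'b::real_normed_vector \<Rightarrow> 'c::real_normed_vector) \<Rightarrow> bool"
  where "joint_lipschitz L M Mu f \<longleftrightarrow> (\<forall>x y u v. norm x \<le> M \<longrightarrow> norm y \<le> M \<longrightarrow> norm u \<le> Mu \<longrightarrow> norm v \<le> Mu \<longrightarrow>
      norm (f x u - f y v) \<le> L * (norm (x - y) + norm (u - v)))"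

lemma joint_lipschitzD:
  "joint_lipschitz L M Mu f \<Longrightarrow> norm x \<le> M \<Longrightarrow> norm y \<le> M \<Longrightarrow> norm u \<le> Mu \<Longrightarrow> norm v \<le> Mu \<Longrightarrow>
    norm (f x u - f y v) \<le> L * (norm (x - y) + norm (u - v))"
  unfolding joint_lipschitz_def by blast

lemma assumption1_zero: "assumption1 f \<Longrightarrow> f 0 0 = 0"
  unfolding assumption1_def by blast

lemma assumption1_joint_lipschitz:
  "assumption1 f \<Longrightarrow> 0 \<le> M \<Longrightarrow> 0 \<le> Mu \<Longrightarrow> \<exists>L>0. joint_lipschitz L M Mu f"
  unfolding assumption1_def joint_lipschitz_def by (simp add: imp_conjL)

lemma Fe_eqI:
  fixes f :: "real^'n \<Rightarrow> real^'m \<Rightarrow> real^'n"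
  assumes f: "assumption1 f" and z0: "z 0 = x"
    and z: "\<And>t. t \<in> {0..T} \<Longrightarrow> (z has_vector_derivative f (z t) u) (at t within {0..T})"
    and T: "0 \<le> T"
  shows "Fe f x u T = z T"
  unfolding Fe_def
proof (rule the_equality)
  show "\<exists>z'. z' 0 = x \<and> (\<forall>t\<in>{0..T}. (z' has_vector_derivative f (z' t) u) (at t within {0..T})) \<and> z' T = z T"
    using z0 z by blast
  fix v assume "\<exists>w. w 0 = x \<and> (\<forall>t\<in>{0..T}. (w has_vector_derivative f (w t) u) (at t within {0..T})) \<and> w T = v"
  then obtain w where w0: "w 0 = x" and w: "\<And>t. t \<in> {0..T} \<Longrightarrow> (w has_vector_derivative f (w t) u) (at t within {0..T})"
    and wT: "w T = v"
    by blast
  have "continuous_on {0..T} z" by (rule has_vector_derivative_imp_continuous_on[OF z])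
  moreover have "continuous_on {0..T} w" by (rule has_vector_derivative_imp_continuous_on[OF w])
  ultimately have "compact (z ` {0..T} \<union> w ` {0..T})"
    by (intro compact_Un compact_continuous_image compact_Icc)
  then obtain M where "0 < M" and M_bound: "\<forall>a \<in> z ` {0..T} \<union> w ` {0..T}. norm a \<le> M"
    using compact_imp_bounded bounded_pos by metis
  then have M: "norm (z t) \<le> M \<and> norm (w t) \<le> M" if "t \<in> {0..T}" for t
    using that by blast
  obtain L where "joint_lipschitz L M (norm u) f"
    using assumption1_joint_lipschitz[OF f, of M "norm u"] \<open>0 < M\<close> by auto
  then have "norm (f (w t) u - f (z t) u) \<le> L * norm (w t - z t)" if "t \<in> {0..T}" for t
    using joint_lipschitzD[of L M "norm u" f "w t" "z t" u u] M[OF that] by simp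
  then have "w T = z T"
    by (intro ode_solutions_agree[where h = "\<lambda>a. f a u", OF w z]) (auto simp: w0 z0 T)
  then show "v = z T" using wT by simp
qed

lemma exact_step_minus_euler_step:
  fixes f :: "real^'n \<Rightarrow> real^'m \<Rightarrow> real^'n"
  assumes f: "assumption1 f" and Lf: "joint_lipschitz L (2 * M) Mu f" and L: "0 \<le> L"
    and y: "norm y \<le> M" and u: "norm u \<le> Mu" and uy: "norm u \<le> k * norm y" and k: "0 \<le> k"
    and T: "0 < T" and TL: "2 * T * L * (1 + k) \<le> 1"
  shows "norm (Fe f y u T - y - T *\<^sub>R f y u) \<le> 2 * L\<^sup>2 * (1 + k) * T\<^sup>2 * norm y"
proof -
  define r where "r = 2 * T * L * (1 + k) * norm y"
  have r: "0 \<le> r" "r \<le> norm y"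
    using mult_right_mono[OF TL norm_ge_zero[of y]] T L k by (auto simp: r_def)
  have near_y: "norm a \<le> norm y + r" if "a \<in> cball y r" for a
    using that norm_triangle_sub[of a y] by (simp add: dist_norm norm_minus_commute)
  have in_box: "norm a \<le> 2 * M" if "a \<in> cball y r" for a
    using near_y[OF that] r(2) y by linarith
  have h_lip: "L-lipschitz_on (cball y r) (\<lambda>a. f a u)"
  proof (rule lipschitz_onI[OF _ L])
    fix a b assume "a \<in> cball y r" "b \<in> cball y r"
    from joint_lipschitzD[OF Lf in_box[OF this(1)] in_box[OF this(2)] u u]
    show "dist (f a u) (f b u) \<le> L * dist a b" by (simp add: dist_norm)
  qed
  define B where "B = L * ((1 + k) * norm y + r)"
  have h_bound: "norm (f a u) \<le> B" if a: "a \<in> cball y r" for a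
  proof -
    have "norm (f a u) \<le> L * (norm a + norm u)"
      using joint_lipschitzD[OF Lf in_box[OF a], of 0 u 0] order_trans[OF norm_ge_zero y]
        order_trans[OF norm_ge_zero u] u assumption1_zero[OF f] by simp
    also have "\<dots> \<le> B"
      unfolding B_def using near_y[OF a] uy L by (intro mult_left_mono) (auto simp: algebra_simps)
    finally show ?thesis .
  qed
  have TL_half: "T * L \<le> 1 / 2"
    using TL mult_nonneg_nonneg[OF mult_nonneg_nonneg[OF less_imp_le[OF T] L] k] by (simp add: algebra_simps)
  have "B * T = r / 2 + (T * L) * r" by (simp add: B_def r_def algebra_simps)
  also have "\<dots> \<le> r" using mult_right_mono[OF TL_half r(1)] by simp
  finally have BT: "B * T \<le> r" .
  have LT: "L * T < 1" using TL_half by (simp add: mult.commute)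
  obtain z where z0: "z 0 = y"
    and z: "\<And>t. t \<in> {0..T} \<Longrightarrow> (z has_vector_derivative f (z t) u) (at t within {0..T})"
    and z_in: "\<And>t. t \<in> {0..T} \<Longrightarrow> z t \<in> cball y r"
    using ode_exists_in_cball[OF h_lip h_bound BT LT T r(1)] by blast
  have "norm (z T - z 0 - T *\<^sub>R f (z 0) u) \<le> T * (L * r)"
    using solution_minus_euler_step[of T z "\<lambda>a. f a u" r L] z z_in h_lip T by (simp add: z0)
  then show ?thesis
    using Fe_eqI[OF f z0 z] T by (simp add: z0 r_def power2_eq_square algebra_simps)
qed

lemma class_Kinf_linear: "0 < c \<Longrightarrow> class_Kinf (\<lambda>T. c * T)"
  unfolding class_Kinf_def strict_mono_on_def
  by (auto intro!: continuous_intros filterlim_tendsto_pos_mult_at_top[OF tendsto_const _ filterlim_ident])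

lemma euler_minus_exact_step:
  fixes f :: "real^'n \<Rightarrow> real^'m \<Rightarrow> real^'n" and V :: "real^'n \<Rightarrow> real^'m"
  assumes f: "assumption1 f" and Lf: "joint_lipschitz L (2 * M) (k * M) f" and L: "0 \<le> L" and k: "0 \<le> k"
    and V0: "V 0 = 0" and V: "\<And>a b. norm a \<le> M \<Longrightarrow> norm b \<le> M \<Longrightarrow> norm (V a - V b) \<le> k * norm (a - b)"
    and x: "norm x \<le> M" and y: "norm y \<le> M" and T: "0 < T" and TL: "2 * T * L * (1 + k) \<le> 1"
  shows "norm (x + T *\<^sub>R f x (V x) - Fe f y (V y) T)
    \<le> (1 + L * (1 + k) * T) * norm (x - y) + T * (2 * L\<^sup>2 * (1 + k) * T) * max (norm x) (norm y)"
proof -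
  have M: "0 \<le> M" using order_trans[OF norm_ge_zero y] .
  have V_small: "norm (V a) \<le> k * norm a" if "norm a \<le> M" for a
    using V[OF that, of 0] V0 M by simp
  have V_box: "norm (V a) \<le> k * M" if "norm a \<le> M" for a
    using V_small[OF that] mult_left_mono[OF that k] by linarith
  have "norm (f x (V x) - f y (V y)) \<le> L * (norm (x - y) + norm (V x - V y))"
    using joint_lipschitzD[OF Lf _ _ V_box[OF x] V_box[OF y]] x y M by simp
  also have "\<dots> \<le> L * ((1 + k) * norm (x - y))"
    using V[OF x y] L by (intro mult_left_mono) (auto simp: algebra_simps)
  finally have f_diff: "norm (f x (V x) - f y (V y)) \<le> L * ((1 + k) * norm (x - y))" .
  have "norm (x - y + T *\<^sub>R (f x (V x) - f y (V y))) \<le> norm (x - y) + T * norm (f x (V x) - f y (V y))"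
    using norm_triangle_ineq[of "x - y" "T *\<^sub>R (f x (V x) - f y (V y))"] T
    by (simp only: norm_scaleR abs_of_pos)
  also have "\<dots> \<le> norm (x - y) + T * (L * ((1 + k) * norm (x - y)))"
    using f_diff T by (simp add: mult_left_mono)
  also have "\<dots> = (1 + L * (1 + k) * T) * norm (x - y)"
    by (simp add: algebra_simps)
  finally have euler: "norm (x - y + T *\<^sub>R (f x (V x) - f y (V y))) \<le> (1 + L * (1 + k) * T) * norm (x - y)" .
  have exact: "norm (Fe f y (V y) T - y - T *\<^sub>R f y (V y)) \<le> 2 * L\<^sup>2 * (1 + k) * T\<^sup>2 * norm y"
    by (rule exact_step_minus_euler_step[OF f Lf L y V_box[OF y] V_small[OF y] k T TL])
  have "norm (x + T *\<^sub>R f x (V x) - Fe f y (V y) T)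
      = norm ((x - y + T *\<^sub>R (f x (V x) - f y (V y))) - (Fe f y (V y) T - y - T *\<^sub>R f y (V y)))"
    by (simp add: algebra_simps)
  also have "\<dots> \<le> (1 + L * (1 + k) * T) * norm (x - y) + 2 * L\<^sup>2 * (1 + k) * T\<^sup>2 * norm y"
    using norm_triangle_ineq4 euler exact by (rule order_trans[OF _ add_mono])
  also have "2 * L\<^sup>2 * (1 + k) * T\<^sup>2 * norm y \<le> T * (2 * L\<^sup>2 * (1 + k) * T) * max (norm x) (norm y)"
  proof -
    have "norm y \<le> max (norm x) (norm y)" "0 \<le> T * (2 * L\<^sup>2 * (1 + k) * T)" using T k by simp_all
    from mult_left_mono[OF this] show ?thesis
      by (simp add: power2_eq_square ac_simps)
  qed
  finally show ?thesis by simp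
qed

theorem lemma2:
  fixes f :: "real^'n \<Rightarrow> real^'m \<Rightarrow> real^'n"
    and uc :: "real^'n \<Rightarrow> real^'m"
    and U :: "real^'n \<Rightarrow> real \<Rightarrow> real^'m"
  assumes "assumption1 f" and "assumption2 uc" and "StL U"
  shows "EPC (\<lambda>x T. x + T *\<^sub>R f x (U x T)) (\<lambda>x T. Fe f x (U x T) T)"
proof -
  obtain K Ts :: "real \<Rightarrow> real" where KTs: "\<forall>M\<ge>0. K M > 0 \<and> Ts M > 0"
    and U: "\<forall>M\<ge>0. \<forall>T. 0 \<le> T \<and> T < Ts M \<longrightarrow> U 0 T = 0 \<and>
        (\<forall>x y. norm x \<le> M \<and> norm y \<le> M \<longrightarrow> norm (U x T - U y T) \<le> K M * norm (x - y))"
    using \<open>StL U\<close> unfolding StL_def by blast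
  show ?thesis
    unfolding EPC_def
  proof (intro allI impI)
    fix M :: real assume M: "0 \<le> M"
    define k where "k = K M"
    have k: "0 < k" using KTs M by (simp add: k_def)
    obtain L where L: "0 < L" and Lf: "joint_lipschitz L (2 * M) (k * M) f"
      using assumption1_joint_lipschitz[OF \<open>assumption1 f\<close>, of "2 * M" "k * M"] M k by auto
    show "\<exists>K>0. \<exists>Ts>0. \<exists>\<rho>. class_Kinf \<rho> \<and> (\<forall>x y T. norm x \<le> M \<and> norm y \<le> M \<and> 0 < T \<and> T < Ts \<longrightarrow>
        norm (x + T *\<^sub>R f x (U x T) - Fe f y (U y T) T)
          \<le> (1 + K * T) * norm (x - y) + T * \<rho> T * max (norm x) (norm y))"
    proof (intro exI conjI allI impI)
      show "0 < L * (1 + k)" "0 < min (Ts M) (1 / (2 * L * (1 + k)))"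
        using L k KTs M by auto
      show "class_Kinf (\<lambda>T. 2 * L\<^sup>2 * (1 + k) * T)"
        using L k by (intro class_Kinf_linear) simp
      fix x y :: "real^'n" and T :: real
      assume xyT: "norm x \<le> M \<and> norm y \<le> M \<and> 0 < T \<and> T < min (Ts M) (1 / (2 * L * (1 + k)))"
      then have "2 * T * L * (1 + k) \<le> 1"
        using L k by (simp add: less_divide_eq mult.commute mult.left_commute)
      with xyT U M show "norm (x + T *\<^sub>R f x (U x T) - Fe f y (U y T) T)
          \<le> (1 + L * (1 + k) * T) * norm (x - y) + T * (2 * L\<^sup>2 * (1 + k) * T) * max (norm x) (norm y)"
        by (intro euler_minus_exact_step[OF \<open>assumption1 f\<close> Lf]) (use k in \<open>auto simp: k_def less_imp_le L\<close>)
    qed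
  qed
qed

end
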